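(* Let $K$ be a positive integer, let $J$ be a positive integer or $\infty$, and write $[J]=\{1,\dots,J\}$ (with $[J]=\mathbb{Z}_+$ if $J=\infty$). Let $Q=[Q_1,\dots,Q_K]$ with $Q_k:[J]\to\{0,1\}$ and $A=[A_1,\dots,A_K]$ with $A_k:[J]\to\mathbb{R}$, and assume: (2) for every $S\subset\{1,\dots,K\}$ with $\mathcal{R}(S)$ non-empty, the columns of $A_{[\mathcal{R}(S),S]}$ are linearly independent; and (3) for every $l$, $A_l(j)=0$ whenever $Q_l(j)=0$. Suppose $k'$ masks $k\neq k'$, and let $\epsilon\in\mathbb{R}$. Then the matrix $\widetilde A=[A_1,\dots,A_{k-1},A_k+\epsilon A_{k'},A_{k+1},\dots,A_K]$ also satisfies conditions (2) and (3) (with the same $Q$).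
   Context: $\operatorname{supp}(Q_l)=\{j: Q_l(j)=1\}$. For $S\subset\{1,\dots,K\}$, $\mathcal{R}(S)\subset[J]$ is the set of indices $j$ such that $Q_l(j)=1$ for all $l\in S$ and $Q_l(j)=0$ for all $l\notin S$. $A_{[\mathcal{R},S]}$ denotes the submatrix of $A$ with rows in $\mathcal{R}$ and columns in $S$. We say $k'$ masks $k$ if $\operatorname{supp}(Q_{k'})\subset\operatorname{supp}(Q_k)$. *)

theory Defs
  imports Main "HOL-Library.Extended_Nat"
begin

definition rows :: "enat \<Rightarrow> nat set" where
  "rows J = {j. 1 \<le> j \<and> enat j \<le> J}"

definition supp :: "enat \<Rightarrow> (nat \<Rightarrow> nat \<Rightarrow> nat) \<Rightarrow> nat \<Rightarrow> nat set" where
  "supp J Q l = {j \<in> rows J. Q l j = 1}"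

definition Rset :: "nat \<Rightarrow> enat \<Rightarrow> (nat \<Rightarrow> nat \<Rightarrow> nat) \<Rightarrow> nat set \<Rightarrow> nat set" where
  "Rset K J Q S = {j \<in> rows J. (\<forall>l\<in>S. Q l j = 1) \<and> (\<forall>l\<in>{1..K} - S. Q l j = 0)}"

definition cols_lin_indep :: "(nat \<Rightarrow> nat \<Rightarrow> real) \<Rightarrow> nat set \<Rightarrow> nat set \<Rightarrow> bool" where
  "cols_lin_indep A R S \<longleftrightarrow>
     (\<forall>c :: nat \<Rightarrow> real. (\<forall>j\<in>R. (\<Sum>l\<in>S. c l * A l j) = 0) \<longrightarrow> (\<forall>l\<in>S. c l = 0))"

definition cond2 :: "nat \<Rightarrow> enat \<Rightarrow> (nat \<Rightarrow> nat \<Rightarrow> nat) \<Rightarrow> (nat \<Rightarrow> nat \<Rightarrow> real) \<Rightarrow> bool" where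
  "cond2 K J Q A \<longleftrightarrow>
     (\<forall>S. S \<subseteq> {1..K} \<longrightarrow> Rset K J Q S \<noteq> {} \<longrightarrow> cols_lin_indep A (Rset K J Q S) S)"

definition cond3 :: "nat \<Rightarrow> enat \<Rightarrow> (nat \<Rightarrow> nat \<Rightarrow> nat) \<Rightarrow> (nat \<Rightarrow> nat \<Rightarrow> real) \<Rightarrow> bool" where
  "cond3 K J Q A \<longleftrightarrow> (\<forall>l\<in>{1..K}. \<forall>j\<in>rows J. Q l j = 0 \<longrightarrow> A l j = 0)"

definition masks :: "enat \<Rightarrow> (nat \<Rightarrow> nat \<Rightarrow> nat) \<Rightarrow> nat \<Rightarrow> nat \<Rightarrow> bool" where
  "masks J Q k' k \<longleftrightarrow> supp J Q k' \<subseteq> supp J Q k"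

end

theory Submission
  imports Defs
begin

text \<open>Adding \<open>\<epsilon>\<close> times column \<open>k'\<close> to column \<open>k\<close> is an invertible column operation, so it
  preserves the linear independence of the columns of \<open>A\<^bsub>[\<R>(S),S]\<^esub>\<close> whenever \<open>k, k' \<in> S\<close>.
  If \<open>k \<notin> S\<close> the block does not change at all, and if \<open>k \<in> S\<close> but \<open>k' \<notin> S\<close> it does not change
  either, because condition (3) makes column \<open>k'\<close> vanish on \<open>\<R>(S)\<close>. Condition (3) itself
  survives because, by masking, \<open>Q\<^sub>k(j) = 0\<close> forces \<open>Q\<^sub>k\<^sub>'(j) = 0\<close>.\<close>

lemma cols_lin_indep_cong:
  assumes "\<And>l j. l \<in> S \<Longrightarrow> j \<in> R \<Longrightarrow> A l j = B l j"
  shows "cols_lin_indep A R S \<longleftrightarrow> cols_lin_indep B R S"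
proof -
  have "(\<Sum>l\<in>S. c l * A l j) = (\<Sum>l\<in>S. c l * B l j)" if "j \<in> R" for c j
    using assms that by (intro sum.cong) auto
  then show ?thesis
    unfolding cols_lin_indep_def by simp
qed

lemma cols_lin_indep_add_col:
  assumes "finite S" and "k \<in> S" and "k' \<in> S" and "k \<noteq> k'"
    and indep: "cols_lin_indep A R S"
  shows "cols_lin_indep (A(k := (\<lambda>j. A k j + \<epsilon> * A k' j))) R S"
  unfolding cols_lin_indep_def
proof (intro allI impI)
  fix c :: "nat \<Rightarrow> real"
  let ?B = "A(k := (\<lambda>j. A k j + \<epsilon> * A k' j))"
  assume c: "\<forall>j\<in>R. (\<Sum>l\<in>S. c l * ?B l j) = 0"
  define d where "d = c(k' := c k' + \<epsilon> * c k)"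
  have "(\<Sum>l\<in>S. d l * A l j) = (\<Sum>l\<in>S. c l * ?B l j)" for j
  proof -
    have "(\<Sum>l\<in>S. d l * A l j)
        = (\<Sum>l\<in>S. c l * A l j + (if l = k' then \<epsilon> * c k * A k' j else 0))"
      by (intro sum.cong refl) (simp add: d_def distrib_right)
    also have "\<dots> = (\<Sum>l\<in>S. c l * A l j + (if l = k then c k * (\<epsilon> * A k' j) else 0))"
      using assms(1-3) by (simp add: sum.distrib)
    also have "\<dots> = (\<Sum>l\<in>S. c l * ?B l j)"
      by (intro sum.cong refl) (simp add: distrib_left)
    finally show ?thesis .
  qed
  with c have "\<forall>j\<in>R. (\<Sum>l\<in>S. d l * A l j) = 0"
    by simp
  then have d0: "\<forall>l\<in>S. d l = 0"
    using indep unfolding cols_lin_indep_def by blast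
  have "c k = d k"
    using assms(4) by (simp add: d_def)
  with d0 assms(2) have "c k = 0"
    by simp
  with d0 show "\<forall>l\<in>S. c l = 0"
    by (simp add: d_def split: if_splits)
qed

lemma cond3_zero_outside_Rset:
  assumes "cond3 K J Q A" and "l \<in> {1..K} - S" and "j \<in> Rset K J Q S"
  shows "A l j = 0"
  using assms by (auto simp: cond3_def Rset_def)

lemma cond2_add_col:
  assumes cond2: "cond2 K J Q A" and cond3: "cond3 K J Q A"
    and "k' \<in> {1..K}" and "k \<noteq> k'"
  shows "cond2 K J Q (A(k := (\<lambda>j. A k j + \<epsilon> * A k' j)))"
  unfolding cond2_def
proof (intro allI impI)
  fix S assume S: "S \<subseteq> {1..K}" and "Rset K J Q S \<noteq> {}"
  then have indep: "cols_lin_indep A (Rset K J Q S) S"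
    using cond2 by (simp add: cond2_def)
  show "cols_lin_indep (A(k := (\<lambda>j. A k j + \<epsilon> * A k' j))) (Rset K J Q S) S"
  proof (cases "k \<in> S \<and> k' \<in> S")
    case True
    then show ?thesis
      using cols_lin_indep_add_col[OF finite_subset[OF S] _ _ \<open>k \<noteq> k'\<close> indep] by simp
  next
    case False
    have "A l j = (A(k := (\<lambda>j. A k j + \<epsilon> * A k' j))) l j"
      if "l \<in> S" and "j \<in> Rset K J Q S" for l j
    proof (cases "l = k")
      case True
      with False \<open>l \<in> S\<close> have "k' \<in> {1..K} - S"
        using \<open>k' \<in> {1..K}\<close> by simp
      then have "A k' j = 0"
        using cond3_zero_outside_Rset[OF cond3 _ \<open>j \<in> Rset K J Q S\<close>] by simp
      with True show ?thesis
        by simp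
    qed simp
    with indep show ?thesis
      using cols_lin_indep_cong by blast
  qed
qed

lemma masks_zero:
  assumes "masks J Q k' k" and "j \<in> rows J" and "Q k' j \<in> {0, 1}" and "Q k j = 0"
  shows "Q k' j = 0"
  using assms by (auto simp: masks_def supp_def)

lemma cond3_add_masking_col:
  assumes cond3: "cond3 K J Q A" and "k' \<in> {1..K}"
    and "\<forall>j\<in>rows J. Q k' j \<in> {0, 1}" and "masks J Q k' k"
  shows "cond3 K J Q (A(k := (\<lambda>j. A k j + \<epsilon> * A k' j)))"
  unfolding cond3_def
proof (intro ballI impI)
  fix l j assume l: "l \<in> {1..K}" and j: "j \<in> rows J" and "Q l j = 0"
  with cond3 have "A l j = 0"
    by (simp add: cond3_def)
  moreover have "A k' j = 0" if "l = k"
  proof -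
    have "Q k' j = 0"
      using masks_zero[OF \<open>masks J Q k' k\<close> j] assms(3) j \<open>Q l j = 0\<close> that by simp
    with cond3 \<open>k' \<in> {1..K}\<close> j show ?thesis
      by (simp add: cond3_def)
  qed
  ultimately show "(A(k := (\<lambda>j. A k j + \<epsilon> * A k' j))) l j = 0"
    by auto
qed

theorem lemma2:
  fixes K :: nat and J :: enat
    and Q :: "nat \<Rightarrow> nat \<Rightarrow> nat" and A :: "nat \<Rightarrow> nat \<Rightarrow> real"
    and k k' :: nat and \<epsilon> :: real
  assumes "K \<ge> 1" and "J \<ge> 1"
    and "\<forall>l\<in>{1..K}. \<forall>j\<in>rows J. Q l j \<in> {0, 1}"
    and "cond2 K J Q A" and "cond3 K J Q A"
    and "k \<in> {1..K}" and "k' \<in> {1..K}" and "k \<noteq> k'"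
    and "masks J Q k' k"
  shows "cond2 K J Q (A(k := (\<lambda>j. A k j + \<epsilon> * A k' j)))
       \<and> cond3 K J Q (A(k := (\<lambda>j. A k j + \<epsilon> * A k' j)))"
proof
  show "cond2 K J Q (A(k := (\<lambda>j. A k j + \<epsilon> * A k' j)))"
    using cond2_add_col assms(4,5,7,8) .
  have "\<forall>j\<in>rows J. Q k' j \<in> {0, 1}"
    using assms(3,7) by blast
  then show "cond3 K J Q (A(k := (\<lambda>j. A k j + \<epsilon> * A k' j)))"
    using cond3_add_masking_col assms(5,7,9) by blast
qed

end
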